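(* Let $n\ge 3$. Let $T_n$ be the set of two-layer comparator networks on $n$ channels that have at least one comparator in the second layer and in which no comparator $(i,j)$ occurs in both layers. Let $R(T'_n)\subseteq T_n$ be any set of representatives of $T_n$ modulo the equivalence relation generated by (i) permutation of channels followed by untangling and (ii) reflection. Then $R(T'_n)$ is a complete set of prefixes for the search of optimal sorting networks in size and depth: for all $d\ge 2$ and $s\ge 0$, if there exists a sorting network on $n$ channels with at most $d$ layers and at most $s$ comparators, then there exists a sorting network on $n$ channels with at most $d$ layers and at most $s$ comparators whose first two layers form a network belonging to $R(T'_n)$.
   Context: A comparator network on $n$ channels is a finite sequence of comparators $(i,j)$ with $1\le i<j\le n$. A comparator $(i,j)$ replaces the values $(x_i,x_j)$ on channels $i,j$ by $(\min(x_i,x_j),\max(x_i,x_j))$. A layer is a set of comparators acting on pairwise disjoint channels. A network is presented as a sequence of layers, and its depth is the number of layers. A sorting network is a comparator network whose output is sorted (nondecreasing from channel $1$ to $n$) for every input. A two-layer network is a network consisting of exactly two layers; either layer may be empty. Permutation and untangling. Given a permutation $\pi$ of the channels, $\pi(C)$ is the network obtained by replacing each comparator $(i,j)$ by a generalized comparator that puts the minimum on channel $\pi(i)$ and the maximum on channel $\pi(j)$. Untangling turns such a generalized network into a standard one. Process the generalized comparators in order. Whenever one puts the minimum on channel $a$ and the maximum on channel $b$ with $a>b$, replace it by the standard comparator $(b,a)$ and exchange the channel labels $a$ and $b$ in all subsequent comparators. Two networks $C,C'$ are equivalent up to permutation if $C'$ equals the untangling of $\pi(C)$ for some permutation $\pi$.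 Reflection. The reflection of a network $C$ on $n$ channels replaces each comparator $(i,j)$ by $(n-j+1,n-i+1)$. *)

theory Defs
  imports Main "HOL-Library.Product_Lexorder"
begin

(* Channels are natural numbers 1..n. *)

type_synonym comp = "nat \<times> nat"
type_synonym layer = "comp set"
type_synonym network = "layer list"

definition is_layer :: "nat \<Rightarrow> layer \<Rightarrow> bool" where
  "is_layer n L \<longleftrightarrow> finite L \<and>
     (\<forall>(i,j)\<in>L. 1 \<le> i \<and> i < j \<and> j \<le> n) \<and>
     (\<forall>c\<in>L. \<forall>c'\<in>L. c \<noteq> c' \<longrightarrow> {fst c, snd c} \<inter> {fst c', snd c'} = {})"

definition is_network :: "nat \<Rightarrow> network \<Rightarrow> bool" where
  "is_network n C \<longleftrightarrow> (\<forall>L\<in>set C. is_layer n L)"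

definition depth :: "network \<Rightarrow> nat" where
  "depth C = length C"

definition net_size :: "network \<Rightarrow> nat" where
  "net_size C = sum_list (map card C)"

definition apply_comp :: "comp \<Rightarrow> (nat \<Rightarrow> int) \<Rightarrow> (nat \<Rightarrow> int)" where
  "apply_comp c x = (case c of (i,j) \<Rightarrow> x(i := min (x i) (x j), j := max (x i) (x j)))"

(* comparators of a layer act on disjoint channels, so the order is irrelevant *)
definition apply_layer :: "layer \<Rightarrow> (nat \<Rightarrow> int) \<Rightarrow> (nat \<Rightarrow> int)" where
  "apply_layer L x = fold apply_comp (sorted_list_of_set L) x"

definition apply_net :: "network \<Rightarrow> (nat \<Rightarrow> int) \<Rightarrow> (nat \<Rightarrow> int)" where
  "apply_net C x = fold apply_layer C x"

definition sorting_network :: "nat \<Rightarrow> network \<Rightarrow> bool" where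
  "sorting_network n C \<longleftrightarrow> is_network n C \<and>
     (\<forall>x. \<forall>i j. 1 \<le> i \<longrightarrow> i \<le> j \<longrightarrow> j \<le> n \<longrightarrow> apply_net C x i \<le> apply_net C x j)"

definition T_set :: "nat \<Rightarrow> network set" where
  "T_set n = {C. is_network n C \<and> length C = 2 \<and> C ! 1 \<noteq> {} \<and> C ! 0 \<inter> C ! 1 = {}}"

(* untangling a sequence of generalized comparators (min to a, max to b) *)
definition sw :: "nat \<Rightarrow> nat \<Rightarrow> nat \<Rightarrow> nat" where
  "sw a b k = (if k = a then b else if k = b then a else k)"

function untangle_seq :: "comp list \<Rightarrow> comp list" where
  "untangle_seq [] = []"
| "untangle_seq ((a,b) # cs) =
     (if b < a then (b,a) # untangle_seq (map (\<lambda>(c,d). (sw a b c, sw a b d)) cs)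
      else (a,b) # untangle_seq cs)"
  by pat_completeness auto
termination by (relation "measure length") auto

fun regroup :: "nat list \<Rightarrow> 'a list \<Rightarrow> 'a list list" where
  "regroup [] xs = []"
| "regroup (k # ks) xs = take k xs # regroup ks (drop k xs)"

definition untangle_net :: "network \<Rightarrow> network" where
  "untangle_net G = map set (regroup (map card G) (untangle_seq (concat (map sorted_list_of_set G))))"

definition perm_net :: "(nat \<Rightarrow> nat) \<Rightarrow> network \<Rightarrow> network" where
  "perm_net \<pi> C = map (\<lambda>L. (\<lambda>(i,j). (\<pi> i, \<pi> j)) ` L) C"

definition reflect_net :: "nat \<Rightarrow> network \<Rightarrow> network" where
  "reflect_net n C = map (\<lambda>L. (\<lambda>(i,j). (n - j + 1, n - i + 1)) ` L) C"

definition sym_step :: "nat \<Rightarrow> network \<Rightarrow> network \<Rightarrow> bool" where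
  "sym_step n C C' \<longleftrightarrow> C \<in> T_set n \<and> C' \<in> T_set n \<and>
     ((\<exists>\<pi>. bij_betw \<pi> {1..n} {1..n} \<and> C' = untangle_net (perm_net \<pi> C)) \<or> C' = reflect_net n C)"

definition T_equiv :: "nat \<Rightarrow> network \<Rightarrow> network \<Rightarrow> bool" where
  "T_equiv n = (symclp (sym_step n))\<^sup>*\<^sup>*"

definition is_representatives :: "nat \<Rightarrow> network set \<Rightarrow> bool" where
  "is_representatives n R \<longleftrightarrow> R \<subseteq> T_set n \<and>
     (\<forall>C\<in>T_set n. \<exists>C'\<in>R. T_equiv n C C') \<and>
     (\<forall>C1\<in>R. \<forall>C2\<in>R. T_equiv n C1 C2 \<longrightarrow> C1 = C2)"

end

theory Submission
  imports Defs "HOL-Library.Multiset" "HOL-Combinatorics.Permutations"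
begin

(* Whether a two-layer prefix P extends to a sorting network of depth at most d and size at most
   s is invariant under both generating symmetries.  Permuting the channels of a network and
   untangling gives a standard network computing the same function up to a relabelling of inputs
   and outputs; so a suffix completing P, relabelled and untangled, completes the image of P, and
   a standard network that sorts up to a permutation of its outputs already sorts, because the
   sorted input is a fixpoint of every standard network.  Reflection conjugates a network with
   "negate the input and reverse the channels", which maps sorting networks to sorting networks.
   Finally every sorting network can be normalised, without growing, so that its first two layers
   lie in T_n: comparators of the second layer that already occur in the first are redundant, an
   emptied second layer is dropped, and a network with one layer gets an empty first layer. *)

section \<open>Semantics of layers\<close>

(* Comparators (a,b) with a > b are allowed; apply_comp (a,b) still puts the minimum on a. *)
definition is_gen_layer :: "nat \<Rightarrow> layer \<Rightarrow> bool" where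
  "is_gen_layer n L \<longleftrightarrow> finite L \<and> (\<forall>(a,b)\<in>L. a \<in> {1..n} \<and> b \<in> {1..n} \<and> a \<noteq> b) \<and>
     (\<forall>c\<in>L. \<forall>c'\<in>L. c \<noteq> c' \<longrightarrow> {fst c, snd c} \<inter> {fst c', snd c'} = {})"

lemma is_layer_imp_gen_layer: "is_layer n L \<Longrightarrow> is_gen_layer n L"
  unfolding is_layer_def is_gen_layer_def by fastforce

lemma is_gen_layer_subset: "is_gen_layer n L \<Longrightarrow> L' \<subseteq> L \<Longrightarrow> is_gen_layer n L'"
  unfolding is_gen_layer_def by (meson finite_subset subsetD)

lemma is_layerD:
  assumes "is_layer n L" "(i,j) \<in> L"
  shows "1 \<le> i" "i < j" "j \<le> n"
  using assms by (auto simp: is_layer_def)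

lemma is_layer_subset: "is_layer n L \<Longrightarrow> L' \<subseteq> L \<Longrightarrow> is_layer n L'"
  unfolding is_layer_def by (meson finite_subset subsetD)

lemma apply_comp_commute:
  assumes "{fst c, snd c} \<inter> {fst c', snd c'} = {}"
  shows "apply_comp c \<circ> apply_comp c' = apply_comp c' \<circ> apply_comp c"
  using assms by (cases c; cases c') (auto simp: fun_eq_iff apply_comp_def)

lemma apply_layer_eq_fold:
  assumes "is_gen_layer n L" "distinct cs" "set cs = L"
  shows "apply_layer L x = fold apply_comp cs x"
proof -
  have "finite L" using assms(1) by (simp add: is_gen_layer_def)
  then have "mset cs = mset (sorted_list_of_set L)"
    using assms(2,3) by (simp add: set_eq_iff_mset_eq_distinct[symmetric])
  moreover have "apply_comp c \<circ> apply_comp c' = apply_comp c' \<circ> apply_comp c"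
    if "c \<in> set cs" "c' \<in> set cs" for c c'
    using that assms(1,3) apply_comp_commute by (cases "c = c'") (auto simp: is_gen_layer_def)
  ultimately show ?thesis
    unfolding apply_layer_def by (metis fold_multiset_equiv)
qed

lemma apply_net_Cons: "apply_net (L # C) x = apply_net C (apply_layer L x)"
  by (simp add: apply_net_def)

lemma apply_net_append: "apply_net (A @ B) x = apply_net B (apply_net A x)"
  by (simp add: apply_net_def)

lemma apply_net_eq_fold_concat:
  "apply_net C x = fold apply_comp (concat (map sorted_list_of_set C)) x"
  by (induction C arbitrary: x) (simp_all add: apply_net_def apply_layer_def)

lemma apply_net_map_set:
  assumes "\<forall>l\<in>set ls. distinct l \<and> is_gen_layer n (set l)"
  shows "apply_net (map set ls) x = fold apply_comp (concat ls) x"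
  using assms
proof (induction ls arbitrary: x)
  case (Cons l ls)
  then show ?case by (simp add: apply_net_Cons apply_layer_eq_fold[of n "set l" l])
qed (simp add: apply_net_def)

lemma apply_layer_empty: "apply_layer {} x = x"
  by (simp add: apply_layer_def)

lemma fold_apply_comp_untouched:
  "\<forall>c\<in>set cs. k \<noteq> fst c \<and> k \<noteq> snd c \<Longrightarrow> fold apply_comp cs x k = x k"
  by (induction cs arbitrary: x) (auto simp: apply_comp_def split: prod.splits)

lemma apply_comp_sorted: "y i \<le> y j \<Longrightarrow> apply_comp (i,j) y = y"
  by (auto simp: apply_comp_def fun_eq_iff)

lemma fold_apply_comp_fixed: "\<forall>c\<in>set cs. apply_comp c y = y \<Longrightarrow> fold apply_comp cs y = y"
  by (induction cs) auto

lemma apply_layer_orders_comparator: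
  assumes "is_gen_layer n L" "(i,j) \<in> L"
  shows "apply_layer L x i \<le> apply_layer L x j"
proof -
  let ?rest = "sorted_list_of_set (L - {(i,j)})"
  have fin: "finite L" using assms(1) by (simp add: is_gen_layer_def)
  then have "apply_layer L x = fold apply_comp ?rest (apply_comp (i,j) x)"
    using apply_layer_eq_fold[OF assms(1), of "(i,j) # ?rest"] assms(2) by (simp add: insert_absorb)
  moreover have "\<forall>c\<in>set ?rest. k \<noteq> fst c \<and> k \<noteq> snd c" if "k = i \<or> k = j" for k
    using assms that fin unfolding is_gen_layer_def by fastforce
  ultimately show ?thesis by (simp add: fold_apply_comp_untouched apply_comp_def min_le_iff_disj)
qed

lemma apply_comp_map_prod:
  assumes "inj p"
  shows "apply_comp (map_prod p p c) z \<circ> p = apply_comp c (z \<circ> p)"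
  using assms by (cases c) (auto simp: fun_eq_iff apply_comp_def inj_eq)

lemma fold_apply_comp_map_prod:
  assumes "inj p"
  shows "fold apply_comp (map (map_prod p p) cs) z \<circ> p = fold apply_comp cs (z \<circ> p)"
  using assms by (induction cs arbitrary: z) (simp_all add: apply_comp_map_prod)

lemma is_gen_layer_image_permutes:
  assumes "is_gen_layer n L" "p permutes {1..n}"
  shows "is_gen_layer n (map_prod p p ` L)"
proof -
  have "p a \<in> {1..n}" if "a \<in> {1..n}" for a
    using that permutes_in_image[OF assms(2)] by blast
  then show ?thesis
    using assms(1) permutes_inj[OF assms(2)] unfolding is_gen_layer_def
    by (fastforce simp: inj_eq simp del: atLeastAtMost_iff)
qed

lemma perm_net_eq_map_prod: "perm_net p C = map ((`) (map_prod p p)) C"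
  unfolding perm_net_def map_prod_def ..

lemma apply_layer_image_permutes:
  assumes "is_gen_layer n L" "p permutes {1..n}"
  shows "apply_layer (map_prod p p ` L) z = apply_layer L (z \<circ> p) \<circ> inv p"
proof -
  let ?cs = "sorted_list_of_set L"
  have inj: "inj p" using assms(2) by (rule permutes_inj)
  have fin: "finite L" using assms(1) by (simp add: is_gen_layer_def)
  have "apply_layer (map_prod p p ` L) z = fold apply_comp (map (map_prod p p) ?cs) z"
    using fin inj by (intro apply_layer_eq_fold[OF is_gen_layer_image_permutes[OF assms]])
      (auto simp: distinct_map intro: inj_on_subset[OF map_prod_inj_on])
  also have "\<dots> = fold apply_comp ?cs (z \<circ> p) \<circ> inv p"
    using fold_apply_comp_map_prod[OF inj, of ?cs z] permutes_inv_o(1)[OF assms(2)]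
    by (metis comp_assoc comp_id)
  finally show ?thesis using apply_layer_eq_fold[OF assms(1), of ?cs] fin by simp
qed

section \<open>Untangling\<close>

lemma apply_net_perm_net:
  assumes "\<forall>L\<in>set C. is_gen_layer n L" "p permutes {1..n}"
  shows "apply_net (perm_net p C) z = apply_net C (z \<circ> p) \<circ> inv p"
  using assms(1)
proof (induction C arbitrary: z)
  case Nil
  show ?case by (simp add: apply_net_def perm_net_def fun_eq_iff permutes_inverses[OF assms(2)])
next
  case (Cons L C)
  have "apply_net (perm_net p (L # C)) z = apply_net (perm_net p C) (apply_layer L (z \<circ> p) \<circ> inv p)"
    using Cons.prems apply_layer_image_permutes[OF _ assms(2)]
    by (simp add: perm_net_eq_map_prod apply_net_Cons)
  also have "\<dots> = apply_net C (apply_layer L (z \<circ> p)) \<circ> inv p"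
    using Cons by (simp add: comp_def permutes_inverses[OF assms(2)])
  finally show ?case by (simp add: apply_net_Cons comp_def)
qed

lemma sw_eq_transpose: "sw = transpose"
  by (simp add: fun_eq_iff sw_def transpose_def)

lemma untangle_seq_Cons:
  "untangle_seq ((a,b) # cs) =
     (if b < a then (b,a) # untangle_seq (map (map_prod (transpose a b) (transpose a b)) cs)
      else (a,b) # untangle_seq cs)"
  by (simp add: sw_eq_transpose map_prod_def)

lemma apply_comp_swap: "apply_comp (a,b) x = apply_comp (b,a) x \<circ> transpose a b"
  by (auto simp: apply_comp_def fun_eq_iff transpose_def)

lemma untangle_seq_semantics:
  assumes "set cs \<subseteq> {1..n} \<times> {1..n}"
  shows "\<exists>t. t permutes {1..n} \<and>
    (\<forall>x. fold apply_comp cs x = fold apply_comp (untangle_seq cs) x \<circ> t)"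
  using assms
proof (induction cs rule: untangle_seq.induct)
  case 1
  show ?case by (auto intro: permutes_id)
next
  case (2 a b cs)
  let ?q = "transpose a b"
  have q: "?q permutes {1..n}" using "2.prems" by (simp add: permutes_swap_id)
  have swap: "(\<lambda>(c,d). (sw a b c, sw a b d)) = map_prod ?q ?q"
    by (simp add: sw_eq_transpose map_prod_def)
  show ?case
  proof (cases "b < a")
    case True
    have "set (map (map_prod ?q ?q) cs) \<subseteq> {1..n} \<times> {1..n}"
      using "2.prems" permutes_in_image[OF q] by auto
    then obtain t where t: "t permutes {1..n}" and
      sem: "\<forall>x. fold apply_comp (map (map_prod ?q ?q) cs) x
              = fold apply_comp (untangle_seq (map (map_prod ?q ?q) cs)) x \<circ> t"
      using "2.IH"(1)[OF True, unfolded swap] by blast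
    have "fold apply_comp ((a,b) # cs) x = fold apply_comp (untangle_seq ((a,b) # cs)) x \<circ> (t \<circ> ?q)"
      for x
    proof -
      have "fold apply_comp ((a,b) # cs) x = fold apply_comp cs (apply_comp (b,a) x \<circ> ?q)"
        by (simp add: apply_comp_swap[of a b])
      also have "\<dots> = fold apply_comp (map (map_prod ?q ?q) cs) (apply_comp (b,a) x) \<circ> ?q"
        using fold_apply_comp_map_prod[OF permutes_inj[OF q]] by metis
      also have "\<dots> = fold apply_comp (untangle_seq ((a,b) # cs)) x \<circ> (t \<circ> ?q)"
        using sem True by (simp add: swap comp_assoc)
      finally show ?thesis .
    qed
    then show ?thesis using permutes_compose[OF q t] by blast
  next
    case False
    have "set cs \<subseteq> {1..n} \<times> {1..n}" using "2.prems" by simp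
    then obtain t where "t permutes {1..n}"
      "\<forall>x. fold apply_comp cs x = fold apply_comp (untangle_seq cs) x \<circ> t"
      using "2.IH"(2)[OF False] by blast
    then show ?thesis using False by auto
  qed
qed

definition sort_comp :: "comp \<Rightarrow> comp" where
  "sort_comp c = (min (fst c) (snd c), max (fst c) (snd c))"

lemma channels_sort_comp: "{fst (sort_comp c), snd (sort_comp c)} = {fst c, snd c}"
  by (auto simp: sort_comp_def min_def max_def)

lemma inj_on_sort_comp:
  assumes "is_gen_layer n L"
  shows "inj_on sort_comp L"
proof (rule inj_onI, rule ccontr)
  fix c c' assume c: "c \<in> L" "c' \<in> L" "sort_comp c = sort_comp c'" "c \<noteq> c'"
  then have "{fst c, snd c} = {fst c', snd c'}" by (metis channels_sort_comp)
  moreover have "{fst c, snd c} \<inter> {fst c', snd c'} = {}"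
    using assms c unfolding is_gen_layer_def by blast
  ultimately show False by blast
qed

lemma is_layer_image_sort_comp:
  assumes "is_gen_layer n L"
  shows "is_layer n (sort_comp ` L)"
  unfolding is_layer_def
proof (intro conjI ballI impI)
  show "finite (sort_comp ` L)" using assms by (simp add: is_gen_layer_def)
next
  fix d assume "d \<in> sort_comp ` L"
  then obtain a b where "(a,b) \<in> L" "d = (min a b, max a b)" by (auto simp: sort_comp_def)
  moreover have "a \<in> {1..n}" "b \<in> {1..n}" "a \<noteq> b"
    using assms calculation(1) unfolding is_gen_layer_def by auto
  ultimately show "case d of (i, j) \<Rightarrow> 1 \<le> i \<and> i < j \<and> j \<le> n" by auto
next
  fix d d' assume "d \<in> sort_comp ` L" "d' \<in> sort_comp ` L" "d \<noteq> d'"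
  then obtain c c' where c: "c \<in> L" "c' \<in> L" "d = sort_comp c" "d' = sort_comp c'"
    by blast
  with \<open>d \<noteq> d'\<close> have "c \<noteq> c'" by blast
  then show "{fst d, snd d} \<inter> {fst d', snd d'} = {}"
    using assms c unfolding is_gen_layer_def by (simp add: channels_sort_comp)
qed

lemma map_map_prod_transpose_id:
  "\<forall>c\<in>set l. a \<notin> {fst c, snd c} \<and> b \<notin> {fst c, snd c} \<Longrightarrow>
    map (map_prod (transpose a b) (transpose a b)) l = l"
  by (intro map_idI) (fastforce simp: transpose_def)

(* The transpositions made while untangling one layer fix the channels of its other comparators,
   so they only reorient that layer and relabel the rest of the sequence. *)
lemma untangle_seq_append_layer:
  assumes "distinct l" "is_gen_layer n (set l)"
  shows "\<exists>q. q permutes {1..n} \<and>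
    untangle_seq (l @ rest) = map sort_comp l @ untangle_seq (map (map_prod q q) rest)"
  using assms
proof (induction l arbitrary: rest)
  case Nil
  show ?case by (auto intro!: exI[of _ id] permutes_id simp: map_prod.id)
next
  case (Cons c l)
  obtain a b where c: "c = (a,b)" by fastforce
  have l: "distinct l" "is_gen_layer n (set l)"
    using Cons.prems by (auto intro: is_gen_layer_subset)
  have ab: "a \<in> {1..n}" "b \<in> {1..n}" "a \<noteq> b"
    using Cons.prems c by (auto simp: is_gen_layer_def)
  show ?case
  proof (cases "b < a")
    case True
    let ?q = "transpose a b"
    have "\<forall>c'\<in>set l. a \<notin> {fst c', snd c'} \<and> b \<notin> {fst c', snd c'}"
      using Cons.prems c unfolding is_gen_layer_def by fastforce
    then have "map (map_prod ?q ?q) l = l" by (rule map_map_prod_transpose_id)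
    then have eq1: "untangle_seq (c # l @ rest) = (b,a) # untangle_seq (l @ map (map_prod ?q ?q) rest)"
      using True by (simp add: c untangle_seq_Cons del: untangle_seq.simps)
    obtain q where q: "q permutes {1..n}" and eq2:
      "untangle_seq (l @ map (map_prod ?q ?q) rest)
         = map sort_comp l @ untangle_seq (map (map_prod q q) (map (map_prod ?q ?q) rest))"
      using Cons.IH[OF l] by blast
    have "sort_comp c = (b,a)" using True c by (simp add: sort_comp_def)
    then have "untangle_seq ((c # l) @ rest)
        = map sort_comp (c # l) @ untangle_seq (map (map_prod (q \<circ> ?q) (q \<circ> ?q)) rest)"
      using eq1 eq2 by (simp add: map_prod.comp del: untangle_seq.simps)
    moreover have "q \<circ> ?q permutes {1..n}"
      using ab q by (simp add: permutes_swap_id permutes_compose)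
    ultimately show ?thesis by blast
  next
    case False
    obtain q where "q permutes {1..n}"
      "untangle_seq (l @ rest) = map sort_comp l @ untangle_seq (map (map_prod q q) rest)"
      using Cons.IH[OF l] by blast
    then show ?thesis
      using False ab by (intro exI[of _ q]) (simp add: c sort_comp_def)
  qed
qed

(* Generalised over q because the layers after the first are relabelled by the transpositions
   accumulated so far. *)
lemma untangle_seq_concat_layers:
  assumes "\<forall>l\<in>set ls. distinct l \<and> is_gen_layer n (set l)" "q permutes {1..n}"
  shows "\<exists>ls'. untangle_seq (concat (map (map (map_prod q q)) ls)) = concat ls' \<and>
    map length ls' = map length ls \<and> (\<forall>l'\<in>set ls'. distinct l' \<and> is_layer n (set l'))"
  using assms
proof (induction ls arbitrary: q)
  case Nil
  show ?case by simp
next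
  case (Cons l ls)
  let ?l = "map (map_prod q q) l"
  let ?rest = "concat (map (map (map_prod q q)) ls)"
  have gen: "is_gen_layer n (set l)" and "distinct l" using Cons.prems(1) by auto
  then have "distinct ?l" and genl: "is_gen_layer n (set ?l)"
    using Cons.prems(2) is_gen_layer_image_permutes[OF gen] permutes_inj[OF Cons.prems(2)]
    by (auto simp: distinct_map intro: inj_on_subset[OF map_prod_inj_on])
  then obtain q' where q': "q' permutes {1..n}"
    and split: "untangle_seq (?l @ ?rest) = map sort_comp ?l @ untangle_seq (map (map_prod q' q') ?rest)"
    using untangle_seq_append_layer by blast
  have "map (map_prod q' q') ?rest = concat (map (map (map_prod (q' \<circ> q) (q' \<circ> q))) ls)"
    by (simp add: map_concat map_prod.comp)
  moreover have "\<forall>l\<in>set ls. distinct l \<and> is_gen_layer n (set l)" using Cons.prems(1) by simp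
  then obtain ls' where "untangle_seq (concat (map (map (map_prod (q' \<circ> q) (q' \<circ> q))) ls)) = concat ls'"
    "map length ls' = map length ls" "\<forall>l'\<in>set ls'. distinct l' \<and> is_layer n (set l')"
    using Cons.IH permutes_compose[OF Cons.prems(2) q'] by blast
  moreover have "distinct (map sort_comp ?l)" "is_layer n (set (map sort_comp ?l))"
    using \<open>distinct ?l\<close> inj_on_sort_comp[OF genl] is_layer_image_sort_comp[OF genl]
    by (simp_all only: distinct_map list.set_map)
  ultimately show ?case
    using split by (intro exI[of _ "map sort_comp ?l # ls'"]) simp
qed

lemma regroup_concat: "regroup (map length xss) (concat xss) = xss"
  by (induction xss) auto

lemma untangle_net_semantics:
  assumes "\<forall>L\<in>set G. is_gen_layer n L"
  obtains t where "t permutes {1..n}" "is_network n (untangle_net G)"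
    "length (untangle_net G) = length G" "net_size (untangle_net G) = net_size G"
    "\<And>x. apply_net G x = apply_net (untangle_net G) x \<circ> t"
proof -
  let ?ls = "map sorted_list_of_set G"
  have fin: "\<forall>L\<in>set G. finite L" using assms by (simp add: is_gen_layer_def)
  then have "\<forall>l\<in>set ?ls. distinct l \<and> is_gen_layer n (set l)" using assms by auto
  from untangle_seq_concat_layers[OF this permutes_id]
  obtain ls' where ls': "untangle_seq (concat ?ls) = concat ls'" "map length ls' = map length ?ls"
    "\<forall>l'\<in>set ls'. distinct l' \<and> is_layer n (set l')"
    unfolding map_prod.id list.map_id0 id_apply by blast
  have "map card G = map length ls'" using ls'(2) by simp
  then have N: "untangle_net G = map set ls'"
    unfolding untangle_net_def ls'(1) by (simp only: regroup_concat)
  have "set (concat ?ls) \<subseteq> {1..n} \<times> {1..n}"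
    using assms fin unfolding is_gen_layer_def by fastforce
  then obtain t where t: "t permutes {1..n}"
    "\<forall>x. fold apply_comp (concat ?ls) x = fold apply_comp (untangle_seq (concat ?ls)) x \<circ> t"
    using untangle_seq_semantics by blast
  show thesis
  proof (rule that[OF t(1)])
    show "is_network n (untangle_net G)" using N ls'(3) by (auto simp: is_network_def)
    show "length (untangle_net G) = length G" using N ls'(2) by (metis length_map)
    have "map card (untangle_net G) = map card G"
      using N ls'(2,3) by (simp add: comp_def distinct_card cong: map_cong)
    then show "net_size (untangle_net G) = net_size G" by (simp add: net_size_def)
    have "\<forall>l\<in>set ls'. distinct l \<and> is_gen_layer n (set l)"
      using ls'(3) is_layer_imp_gen_layer by blast
    then show "apply_net G x = apply_net (untangle_net G) x \<circ> t" for x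
      using t(2) ls'(1) N apply_net_eq_fold_concat apply_net_map_set by metis
  qed
qed

lemma untangle_perm_net_semantics:
  assumes "is_network n C" "p permutes {1..n}"
  obtains t where "t permutes {1..n}" "is_network n (untangle_net (perm_net p C))"
    "depth (untangle_net (perm_net p C)) = depth C"
    "net_size (untangle_net (perm_net p C)) = net_size C"
    "\<And>x. apply_net C (x \<circ> p) = apply_net (untangle_net (perm_net p C)) x \<circ> t"
proof -
  have gen: "\<forall>L\<in>set C. is_gen_layer n L"
    using assms(1) is_layer_imp_gen_layer by (auto simp: is_network_def)
  then have "\<forall>L\<in>set (perm_net p C). is_gen_layer n L"
    using is_gen_layer_image_permutes[OF _ assms(2)] by (auto simp: perm_net_eq_map_prod)
  then obtain t where t: "t permutes {1..n}" "is_network n (untangle_net (perm_net p C))"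
    "length (untangle_net (perm_net p C)) = length (perm_net p C)"
    "net_size (untangle_net (perm_net p C)) = net_size (perm_net p C)"
    "\<And>x. apply_net (perm_net p C) x = apply_net (untangle_net (perm_net p C)) x \<circ> t"
    using untangle_net_semantics by blast
  show thesis
  proof (rule that[OF permutes_compose[OF assms(2) t(1)] t(2)])
    show "depth (untangle_net (perm_net p C)) = depth C"
      using t(3) by (simp add: depth_def perm_net_def)
    have "inj_on (map_prod p p) L" for L
      using permutes_inj[OF assms(2)] by (auto intro: inj_on_subset[OF map_prod_inj_on])
    then show "net_size (untangle_net (perm_net p C)) = net_size C"
      using t(4) by (simp add: net_size_def perm_net_eq_map_prod comp_def card_image)
    show "apply_net C (x \<circ> p) = apply_net (untangle_net (perm_net p C)) x \<circ> (t \<circ> p)" for x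
      using apply_net_perm_net[OF gen assms(2), of x] t(5)[of x] permutes_inv_o(2)[OF assms(2)]
      by (metis comp_assoc comp_id)
  qed
qed

section \<open>Sorting up to a permutation of the outputs\<close>

lemma apply_net_mono_input:
  assumes "is_network n C" "mono x"
  shows "apply_net C x = x"
  using assms(1)
proof (induction C)
  case (Cons L C)
  have "apply_layer L x = x"
    unfolding apply_layer_def
  proof (rule fold_apply_comp_fixed, rule ballI)
    fix c assume "c \<in> set (sorted_list_of_set L)"
    then obtain i j where "c = (i,j)" "i < j"
      using Cons.prems by (fastforce simp: is_network_def is_layer_def)
    then show "apply_comp c x = x" using assms(2) by (simp add: apply_comp_sorted monoD)
  qed
  then show ?case using Cons by (simp add: apply_net_Cons is_network_def)
qed (simp add: apply_net_def)

lemma permutes_mono_on_eq_id: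
  fixes p :: "'a::linorder \<Rightarrow> 'a"
  assumes "p permutes S" "finite S" "mono_on S p"
  shows "p = id"
proof -
  let ?xs = "sorted_list_of_set S"
  have "map p ?xs = ?xs"
  proof (rule sorted_distinct_set_unique)
    show "sorted (map p ?xs)"
      unfolding sorted_map
      by (rule sorted_wrt_mono_rel[OF _ sorted_sorted_list_of_set])
        (use assms(2,3) in \<open>auto dest: mono_onD\<close>)
    show "distinct (map p ?xs)"
      using permutes_inj[OF assms(1)] by (simp add: distinct_map inj_on_subset[of p UNIV])
    show "set (map p ?xs) = set ?xs"
      using assms(1,2) by (simp add: permutes_image)
  qed simp_all
  then have "p x = x" if "x \<in> S" for x
    using that assms(2) map_eq_conv[of p ?xs "\<lambda>x. x"] by simp
  then show ?thesis using permutes_not_in[OF assms(1)] by fastforce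
qed

lemma sorting_networkD:
  "sorting_network n C \<Longrightarrow> 1 \<le> i \<Longrightarrow> i \<le> j \<Longrightarrow> j \<le> n \<Longrightarrow> apply_net C x i \<le> apply_net C x j"
  by (simp add: sorting_network_def)

lemma sorting_network_if_sorted_up_to_permutation:
  assumes "is_network n N" "c permutes {1..n}"
    "\<And>x i j. 1 \<le> i \<Longrightarrow> i \<le> j \<Longrightarrow> j \<le> n \<Longrightarrow> apply_net N x (c i) \<le> apply_net N x (c j)"
  shows "sorting_network n N"
proof -
  have "apply_net N int = int"
    by (rule apply_net_mono_input[OF assms(1)]) (simp add: mono_def)
  then have "mono_on {1..n} c"
    using assms(3)[of _ _ int] by (auto intro!: mono_onI)
  then have "c = id"
    using permutes_mono_on_eq_id[OF assms(2)] by simp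
  then show ?thesis using assms(1,3) by (simp add: sorting_network_def)
qed

section \<open>Extending prefixes is invariant under the symmetries\<close>

definition extends_to_sorter :: "nat \<Rightarrow> nat \<Rightarrow> nat \<Rightarrow> network \<Rightarrow> bool" where
  "extends_to_sorter n d s P \<longleftrightarrow>
     (\<exists>S. sorting_network n (P @ S) \<and> depth (P @ S) \<le> d \<and> net_size (P @ S) \<le> s)"

definition perm_similar :: "nat \<Rightarrow> network \<Rightarrow> network \<Rightarrow> bool" where
  "perm_similar n A B \<longleftrightarrow> is_network n A \<and> is_network n B \<and> depth A = depth B \<and>
     net_size A = net_size B \<and>
     (\<exists>a b. a permutes {1..n} \<and> b permutes {1..n} \<and>
        (\<forall>x. apply_net A (x \<circ> a) = apply_net B x \<circ> b))"

lemma perm_similar_sym: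
  assumes "perm_similar n A B"
  shows "perm_similar n B A"
proof -
  obtain a b where a: "a permutes {1..n}" and b: "b permutes {1..n}"
    and ab: "\<And>x. apply_net A (x \<circ> a) = apply_net B x \<circ> b"
    using assms unfolding perm_similar_def by blast
  have "apply_net B (x \<circ> inv a) = apply_net A x \<circ> inv b" for x
  proof -
    have "apply_net A x = apply_net B (x \<circ> inv a) \<circ> b"
      using ab[of "x \<circ> inv a"] permutes_inv_o(2)[OF a] by (simp add: comp_assoc)
    then show ?thesis using permutes_inv_o(1)[OF b] by (simp add: comp_assoc)
  qed
  then show ?thesis
    using assms permutes_inv[OF a] permutes_inv[OF b] unfolding perm_similar_def by metis
qed

lemma is_network_append: "is_network n (A @ B) \<longleftrightarrow> is_network n A \<and> is_network n B"
  by (auto simp: is_network_def)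

lemma depth_append: "depth (A @ B) = depth A + depth B"
  by (simp add: depth_def)

lemma net_size_append: "net_size (A @ B) = net_size A + net_size B"
  by (simp add: net_size_def)

lemma extends_to_sorter_perm_similar:
  assumes "perm_similar n A B" "extends_to_sorter n d s A"
  shows "extends_to_sorter n d s B"
proof -
  obtain a b where b: "b permutes {1..n}"
    and ab: "\<And>x. apply_net A (x \<circ> a) = apply_net B x \<circ> b"
    using assms(1) unfolding perm_similar_def by blast
  obtain S where S: "sorting_network n (A @ S)" "depth (A @ S) \<le> d" "net_size (A @ S) \<le> s"
    using assms(2) unfolding extends_to_sorter_def by blast
  let ?N = "untangle_net (perm_net b S)"
  have "is_network n S" using S(1) by (simp add: sorting_network_def is_network_def)
  then obtain t where t: "t permutes {1..n}" and N: "is_network n ?N" "depth ?N = depth S"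
    "net_size ?N = net_size S" and tS: "\<And>z. apply_net S (z \<circ> b) = apply_net ?N z \<circ> t"
    using untangle_perm_net_semantics[OF _ b] by blast
  have sem: "apply_net (A @ S) (x \<circ> a) = apply_net (B @ ?N) x \<circ> t" for x
    using ab tS by (simp add: apply_net_append)
  have "is_network n (B @ ?N)"
    using assms(1) N(1) by (simp add: perm_similar_def is_network_append)
  moreover have "apply_net (B @ ?N) x (t i) \<le> apply_net (B @ ?N) x (t j)"
    if "1 \<le> i" "i \<le> j" "j \<le> n" for x i j
    using sorting_networkD[OF S(1) that, of "x \<circ> a"] sem[of x] by simp
  ultimately have "sorting_network n (B @ ?N)"
    by (rule sorting_network_if_sorted_up_to_permutation[OF _ t])
  moreover have "depth (B @ ?N) \<le> d" "net_size (B @ ?N) \<le> s"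
    using assms(1) S(2,3) N(2,3) by (simp_all add: perm_similar_def depth_append net_size_append)
  ultimately show ?thesis unfolding extends_to_sorter_def by blast
qed

(* Extended by the identity outside 1..n, so that it is an involution of all channels. *)
definition mirror_chan :: "nat \<Rightarrow> nat \<Rightarrow> nat" where
  "mirror_chan n k = (if k \<in> {1..n} then n + 1 - k else k)"

definition mirror_input :: "nat \<Rightarrow> (nat \<Rightarrow> int) \<Rightarrow> nat \<Rightarrow> int" where
  "mirror_input n x k = - x (mirror_chan n k)"

definition reflect_comp :: "nat \<Rightarrow> comp \<Rightarrow> comp" where
  "reflect_comp n c = (mirror_chan n (snd c), mirror_chan n (fst c))"

lemma mirror_chan_mirror_chan [simp]: "mirror_chan n (mirror_chan n k) = k"
  by (auto simp: mirror_chan_def)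

lemma inj_mirror_chan: "inj (mirror_chan n)"
  by (metis injI mirror_chan_mirror_chan)

lemma mirror_input_mirror_input [simp]: "mirror_input n (mirror_input n x) = x"
  by (simp add: mirror_input_def fun_eq_iff)

lemma reflect_comp_reflect_comp [simp]: "reflect_comp n (reflect_comp n c) = c"
  by (simp add: reflect_comp_def)

lemma inj_reflect_comp: "inj (reflect_comp n)"
  by (metis injI reflect_comp_reflect_comp)

lemma reflect_net_eq_map_image:
  assumes "is_network n C"
  shows "reflect_net n C = map ((`) (reflect_comp n)) C"
  unfolding reflect_net_def
proof (rule map_cong[OF refl], rule image_cong[OF refl])
  fix L c assume "L \<in> set C" "c \<in> L"
  obtain i j where c: "c = (i,j)" by (cases c)
  have "is_layer n L" using assms \<open>L \<in> set C\<close> by (simp add: is_network_def)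
  moreover have "(i,j) \<in> L" using \<open>c \<in> L\<close> c by simp
  ultimately have "1 \<le> i" "i < j" "j \<le> n" by (rule is_layerD)+
  with c show "(case c of (i, j) \<Rightarrow> (n - j + 1, n - i + 1)) = reflect_comp n c"
    by (simp add: reflect_comp_def mirror_chan_def Suc_diff_le)
qed

lemma mirror_chan_eq_iff: "mirror_chan n a = b \<longleftrightarrow> a = mirror_chan n b"
  by (metis mirror_chan_mirror_chan)

lemma apply_comp_reflect_comp:
  "apply_comp (reflect_comp n c) x = mirror_input n (apply_comp c (mirror_input n x))"
proof (cases c)
  case (Pair i j)
  then show ?thesis
    by (cases "i = j")
      (auto simp: fun_eq_iff apply_comp_def reflect_comp_def mirror_input_def mirror_chan_eq_iff
        min_def max_def)
qed

lemma is_layer_image_reflect_comp: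
  assumes "is_layer n L"
  shows "is_layer n (reflect_comp n ` L)"
  unfolding is_layer_def
proof (intro conjI ballI impI)
  show "finite (reflect_comp n ` L)" using assms by (simp add: is_layer_def)
next
  fix d assume "d \<in> reflect_comp n ` L"
  then obtain i j where "(i,j) \<in> L" "d = (mirror_chan n j, mirror_chan n i)"
    by (auto simp: reflect_comp_def)
  moreover have "1 \<le> i" "i < j" "j \<le> n" using assms calculation(1) by (rule is_layerD)+
  ultimately show "case d of (i, j) \<Rightarrow> 1 \<le> i \<and> i < j \<and> j \<le> n"
    by (simp add: mirror_chan_def, arith)
next
  fix d d' assume "d \<in> reflect_comp n ` L" "d' \<in> reflect_comp n ` L" "d \<noteq> d'"
  then obtain c c' where c: "c \<in> L" "c' \<in> L" "c \<noteq> c'"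
    "d = reflect_comp n c" "d' = reflect_comp n c'"
    by blast
  then have "{fst c, snd c} \<inter> {fst c', snd c'} = {}"
    using assms unfolding is_layer_def by blast
  then show "{fst d, snd d} \<inter> {fst d', snd d'} = {}"
    by (auto simp: c reflect_comp_def inj_eq[OF inj_mirror_chan])
qed

lemma fold_apply_comp_reflect_comp:
  "fold apply_comp (map (reflect_comp n) cs) x = mirror_input n (fold apply_comp cs (mirror_input n x))"
  by (induction cs arbitrary: x) (simp_all add: apply_comp_reflect_comp)

lemma apply_net_reflect_net:
  assumes "is_network n C"
  shows "apply_net (reflect_net n C) x = mirror_input n (apply_net C (mirror_input n x))"
  using assms
proof (induction C arbitrary: x)
  case (Cons L C)
  have L: "is_layer n L" and fin: "finite L"
    using Cons.prems by (auto simp: is_network_def is_layer_def)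
  have "apply_layer (reflect_comp n ` L) x
      = fold apply_comp (map (reflect_comp n) (sorted_list_of_set L)) x"
    using is_layer_image_reflect_comp[OF L] fin
    by (intro apply_layer_eq_fold[OF is_layer_imp_gen_layer])
      (auto simp: distinct_map inj_on_subset[OF inj_reflect_comp])
  also have "\<dots> = mirror_input n (apply_layer L (mirror_input n x))"
    by (simp add: fold_apply_comp_reflect_comp apply_layer_def)
  finally show ?case
    using Cons by (simp add: reflect_net_eq_map_image[OF Cons.prems] apply_net_Cons is_network_def
        reflect_net_eq_map_image[symmetric])
qed (simp add: reflect_net_def apply_net_def)

lemma reflect_net_properties:
  assumes "is_network n C"
  shows "is_network n (reflect_net n C)" "depth (reflect_net n C) = depth C"
    "net_size (reflect_net n C) = net_size C"
  using assms is_layer_image_reflect_comp card_image[OF inj_on_subset[OF inj_reflect_comp]]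
  by (simp_all add: reflect_net_eq_map_image[OF assms] is_network_def depth_def net_size_def comp_def)

lemma reflect_net_reflect_net:
  assumes "is_network n C"
  shows "reflect_net n (reflect_net n C) = C"
  using reflect_net_eq_map_image[OF assms] reflect_net_eq_map_image[OF reflect_net_properties(1)[OF assms]]
  by (simp add: image_image comp_def)

lemma sorting_network_reflect_net:
  assumes "sorting_network n C"
  shows "sorting_network n (reflect_net n C)"
  unfolding sorting_network_def
proof (intro conjI allI impI)
  have C: "is_network n C" using assms by (simp add: sorting_network_def)
  then show "is_network n (reflect_net n C)" by (rule reflect_net_properties)
  fix x i j assume ij: "1 \<le> i" "i \<le> j" "j \<le> n"
  have out: "apply_net (reflect_net n C) x k = - apply_net C (mirror_input n x) (n + 1 - k)"
    if "k \<in> {1..n}" for k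
    using that by (simp add: apply_net_reflect_net[OF C] mirror_input_def mirror_chan_def)
  have "apply_net C (mirror_input n x) (n + 1 - j) \<le> apply_net C (mirror_input n x) (n + 1 - i)"
    by (rule sorting_networkD[OF assms]) (use ij in auto)
  moreover have "i \<in> {1..n}" "j \<in> {1..n}" using ij by auto
  ultimately show "apply_net (reflect_net n C) x i \<le> apply_net (reflect_net n C) x j"
    by (simp only: out neg_le_iff_le)
qed

lemma extends_to_sorter_reflect_net:
  assumes "is_network n P" "extends_to_sorter n d s P"
  shows "extends_to_sorter n d s (reflect_net n P)"
proof -
  obtain S where S: "sorting_network n (P @ S)" "depth (P @ S) \<le> d" "net_size (P @ S) \<le> s"
    using assms(2) unfolding extends_to_sorter_def by blast
  have PS: "is_network n (P @ S)" using S(1) by (simp add: sorting_network_def)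
  have "sorting_network n (reflect_net n (P @ S))" "depth (reflect_net n (P @ S)) \<le> d"
    "net_size (reflect_net n (P @ S)) \<le> s"
    using sorting_network_reflect_net[OF S(1)] reflect_net_properties[OF PS] S(2,3) by simp_all
  moreover have "reflect_net n (P @ S) = reflect_net n P @ reflect_net n S"
    by (simp add: reflect_net_def)
  ultimately show ?thesis unfolding extends_to_sorter_def by (intro exI[of _ "reflect_net n S"]) simp
qed

lemma permutes_extend_bij_betw:
  assumes "bij_betw p S S"
  shows "(\<lambda>k. if k \<in> S then p k else k) permutes S"
  using assms by (intro bij_imp_permutes) (auto cong: bij_betw_cong)

lemma perm_net_cong:
  assumes "is_network n C" "\<And>k. k \<in> {1..n} \<Longrightarrow> p k = q k"
  shows "perm_net p C = perm_net q C"
proof -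
  have "(\<lambda>(i,j). (p i, p j)) c = (\<lambda>(i,j). (q i, q j)) c" if "L \<in> set C" "c \<in> L" for L c
  proof -
    obtain i j where c: "c = (i,j)" by (cases c)
    have "is_layer n L" using assms(1) that(1) by (simp add: is_network_def)
    then have "i \<in> {1..n}" "j \<in> {1..n}" using that(2) c is_layerD by fastforce+
    then show ?thesis using assms(2) c by simp
  qed
  then show ?thesis unfolding perm_net_def by (auto intro!: map_cong image_cong)
qed

lemma perm_similar_untangle_perm_net:
  assumes "is_network n C" "p permutes {1..n}"
  shows "perm_similar n C (untangle_net (perm_net p C))"
  using untangle_perm_net_semantics[OF assms] assms unfolding perm_similar_def by metis

lemma sym_step_extends_to_sorter:
  assumes "sym_step n C C'"
  shows "extends_to_sorter n d s C \<longleftrightarrow> extends_to_sorter n d s C'"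
proof -
  have C: "is_network n C" and C': "is_network n C'"
    using assms by (simp_all add: sym_step_def T_set_def)
  consider (perm) p where "bij_betw p {1..n} {1..n}" "C' = untangle_net (perm_net p C)"
    | (reflect) "C' = reflect_net n C"
    using assms unfolding sym_step_def by blast
  then show ?thesis
  proof cases
    case perm
    let ?q = "\<lambda>k. if k \<in> {1..n} then p k else k"
    have q: "?q permutes {1..n}" using perm(1) by (rule permutes_extend_bij_betw)
    have "C' = untangle_net (perm_net ?q C)" using perm(2) perm_net_cong[OF C, of p ?q] by simp
    then have "perm_similar n C C'" using perm_similar_untangle_perm_net[OF C q] by simp
    then show ?thesis using extends_to_sorter_perm_similar perm_similar_sym by blast
  next
    case reflect
    then have "C = reflect_net n C'" using reflect_net_reflect_net[OF C] by simp
    then show ?thesis using reflect extends_to_sorter_reflect_net C C' by metis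
  qed
qed

lemma T_equiv_extends_to_sorter:
  assumes "T_equiv n P P'" "extends_to_sorter n d s P"
  shows "extends_to_sorter n d s P'"
  using assms unfolding T_equiv_def
proof (induction rule: rtranclp_induct)
  case (step Q Q')
  then show ?case using sym_step_extends_to_sorter by (auto simp: symclp_def)
qed

section \<open>A normal form for the first two layers\<close>

(* After L1 the two channels of every comparator of L1 are in order. *)
lemma apply_layer_after_layer_Diff:
  assumes "is_layer n L1" "is_layer n L2"
  shows "apply_layer L2 (apply_layer L1 x) = apply_layer (L2 - L1) (apply_layer L1 x)"
proof -
  let ?y = "apply_layer L1 x"
  have fin: "finite L2" using assms(2) by (simp add: is_layer_def)
  have "apply_layer L2 ?y
      = fold apply_comp (sorted_list_of_set (L2 - L1)) (fold apply_comp (sorted_list_of_set (L2 \<inter> L1)) ?y)"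
    using apply_layer_eq_fold[OF is_layer_imp_gen_layer[OF assms(2)],
        of "sorted_list_of_set (L2 \<inter> L1) @ sorted_list_of_set (L2 - L1)"] fin
    by (auto simp: Int_Diff_disjoint Int_Diff_Un)
  also have "fold apply_comp (sorted_list_of_set (L2 \<inter> L1)) ?y = ?y"
  proof (rule fold_apply_comp_fixed, rule ballI)
    fix c assume "c \<in> set (sorted_list_of_set (L2 \<inter> L1))"
    then have "c \<in> L1" using fin by simp
    moreover obtain i j where "c = (i,j)" by (cases c)
    ultimately show "apply_comp c ?y = ?y"
      using apply_layer_orders_comparator[OF is_layer_imp_gen_layer[OF assms(1)]]
      by (simp add: apply_comp_sorted)
  qed
  finally show ?thesis by (simp add: apply_layer_def)
qed

lemma sorting_network_not_identity:
  assumes "2 \<le> n" "sorting_network n C"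
  shows "apply_net C \<noteq> id"
proof
  assume "apply_net C = id"
  moreover have "apply_net C (\<lambda>k. - int k) 1 \<le> apply_net C (\<lambda>k. - int k) 2"
    using assms by (intro sorting_networkD) auto
  ultimately show False by simp
qed

lemma sorting_network_cong:
  "sorting_network n C \<Longrightarrow> apply_net C' = apply_net C \<Longrightarrow> is_network n C' \<Longrightarrow> sorting_network n C'"
  by (simp add: sorting_network_def)

lemma sorting_network_second_layer_Diff:
  assumes "sorting_network n (L1 # L2 # rest)"
  shows "sorting_network n (L1 # (L2 - L1) # rest)"
proof -
  have L: "is_layer n L1" "is_layer n L2" "is_network n rest"
    using assms by (simp_all add: sorting_network_def is_network_def)
  then have "apply_net (L1 # (L2 - L1) # rest) = apply_net (L1 # L2 # rest)"
    by (simp add: fun_eq_iff apply_net_Cons apply_layer_after_layer_Diff)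
  moreover have "is_network n (L1 # (L2 - L1) # rest)"
    using L is_layer_subset[OF L(2), of "L2 - L1"] by (simp add: is_network_def)
  ultimately show ?thesis by (rule sorting_network_cong[OF assms])
qed

lemma sorting_network_normal_prefix:
  assumes "2 \<le> n" "sorting_network n C"
  shows "\<exists>C'. sorting_network n C' \<and> depth C' \<le> max 2 (depth C) \<and> net_size C' \<le> net_size C \<and>
    take 2 C' \<in> T_set n"
  using assms(2)
proof (induction "length C" arbitrary: C rule: less_induct)
  case less
  have C: "is_network n C" using less.prems by (simp add: sorting_network_def)
  have not_id: "apply_net C \<noteq> id" using sorting_network_not_identity[OF assms(1) less.prems] .
  consider "C = []" | L1 where "C = [L1]" | L1 L2 rest where "C = L1 # L2 # rest"
    by (metis remdups_adj.cases)
  then show ?case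
  proof cases
    case 1
    then show ?thesis using not_id by (simp add: apply_net_def fun_eq_iff)
  next
    case (2 L1)
    have "L1 \<noteq> {}" using not_id 2 by (auto simp: apply_net_def apply_layer_empty fun_eq_iff)
    moreover have "apply_net [{}, L1] = apply_net C"
      by (simp add: 2 apply_net_def apply_layer_empty fun_eq_iff)
    moreover have "is_network n [{}, L1]" using C 2 by (simp add: is_network_def is_layer_def)
    ultimately have "sorting_network n [{}, L1]" "take 2 [{}, L1] \<in> T_set n"
      using sorting_network_cong[OF less.prems] by (simp_all add: T_set_def)
    then show ?thesis by (intro exI[of _ "[{}, L1]"]) (simp add: 2 depth_def net_size_def)
  next
    case (3 L1 L2 rest)
    let ?C' = "L1 # (L2 - L1) # rest"
    have sorting: "sorting_network n ?C'"
      using sorting_network_second_layer_Diff less.prems 3 by simp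
    have size: "net_size ?C' \<le> net_size C"
      using C 3 by (simp add: net_size_def is_network_def is_layer_def card_mono)
    show ?thesis
    proof (cases "L2 - L1 = {}")
      case True
      have "sorting_network n (L1 # rest)"
        using sorting by (rule sorting_network_cong)
          (use sorting in \<open>simp_all add: True fun_eq_iff apply_net_Cons apply_layer_empty
            sorting_network_def is_network_def\<close>)
      then obtain C' where "sorting_network n C'" "depth C' \<le> max 2 (depth (L1 # rest))"
        "net_size C' \<le> net_size (L1 # rest)" "take 2 C' \<in> T_set n"
        using less.hyps[of "L1 # rest"] 3 by auto
      then show ?thesis by (intro exI[of _ C']) (auto simp: 3 depth_def net_size_def)
    next
      case False
      have "take 2 ?C' \<in> T_set n"
        using sorting False by (simp add: T_set_def sorting_network_def is_network_def Int_Diff)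
      then show ?thesis using sorting size by (intro exI[of _ ?C']) (simp add: 3 depth_def)
    qed
  qed
qed

theorem mainTheorem1:
  fixes n :: nat and R :: "network set"
  assumes "n \<ge> 3"
    and "is_representatives n R"
  shows "\<forall>d s. d \<ge> 2 \<longrightarrow>
     (\<exists>C. sorting_network n C \<and> depth C \<le> d \<and> net_size C \<le> s) \<longrightarrow>
     (\<exists>C. sorting_network n C \<and> depth C \<le> d \<and> net_size C \<le> s \<and>
          length C \<ge> 2 \<and> take 2 C \<in> R)"
proof (intro allI impI)
  fix d s :: nat
  assume "d \<ge> 2" and "\<exists>C. sorting_network n C \<and> depth C \<le> d \<and> net_size C \<le> s"
  then obtain C where C: "sorting_network n C" "depth C \<le> d" "net_size C \<le> s"
    by blast
  obtain C0 where C0: "sorting_network n C0" "depth C0 \<le> max 2 (depth C)"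
    "net_size C0 \<le> net_size C" "take 2 C0 \<in> T_set n"
    using sorting_network_normal_prefix[OF _ C(1)] assms(1) by auto
  obtain P where P: "P \<in> R" "T_equiv n (take 2 C0) P"
    using assms(2) C0(4) unfolding is_representatives_def by blast
  have "extends_to_sorter n d s (take 2 C0)"
    using C C0 \<open>d \<ge> 2\<close> unfolding extends_to_sorter_def by (intro exI[of _ "drop 2 C0"]) simp
  with P(2) have "extends_to_sorter n d s P" by (rule T_equiv_extends_to_sorter)
  then obtain S where S: "sorting_network n (P @ S)" "depth (P @ S) \<le> d" "net_size (P @ S) \<le> s"
    unfolding extends_to_sorter_def by blast
  have "length P = 2" using P(1) assms(2) by (auto simp: is_representatives_def T_set_def)
  then show "\<exists>C. sorting_network n C \<and> depth C \<le> d \<and> net_size C \<le> s \<and> length C \<ge> 2 \<and> take 2 C \<in> R"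
    using S P(1) by (intro exI[of _ "P @ S"]) simp
qed

end
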